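(* Let $L$ be a regular zero-one language and $\mathcal{A}_L=\langle Q,A,\cdot,q_0,F\rangle$ its minimal automaton. Then for every subset $P\subseteq Q$, the language $\mathrm{Past}(P)=\{w\in A^*: q_0\cdot w\in P\}$ is also a zero-one language.
   Context: $\mu(L)=\lim_{n\to\infty}|L\cap A^n|/|A|^n$ when it exists; a zero-one language is a regular language $L$ with $\mu(L)$ existing and in $\{0,1\}$. Automata are complete, deterministic, finite, accessible. *)

theory Defs
  imports Complex_Main
begin

text \<open>Words over a finite alphabet A are lists with letters in A (A^* = lists A).\<close>

definition act :: "('s \<Rightarrow> 'a \<Rightarrow> 's) \<Rightarrow> 's \<Rightarrow> 'a list \<Rightarrow> 's" where
  "act delta q w = foldl delta q w"

definition regular :: "'a set \<Rightarrow> 'a list set \<Rightarrow> bool" where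
  "regular A L \<longleftrightarrow> L \<subseteq> lists A \<and>
     (\<exists>(Q::nat set) delta q0 F. finite Q \<and> q0 \<in> Q \<and>
        (\<forall>q\<in>Q. \<forall>a\<in>A. delta q a \<in> Q) \<and> F \<subseteq> Q \<and>
        L = {w \<in> lists A. act delta q0 w \<in> F})"

definition words_len :: "'a set \<Rightarrow> nat \<Rightarrow> 'a list set" where
  "words_len A n = {w \<in> lists A. length w = n}"

definition density_ratio :: "'a set \<Rightarrow> 'a list set \<Rightarrow> nat \<Rightarrow> real" where
  "density_ratio A L n = real (card (L \<inter> words_len A n)) / real (card A) ^ n"

definition zero_one_lang :: "'a set \<Rightarrow> 'a list set \<Rightarrow> bool" where
  "zero_one_lang A L \<longleftrightarrow> regular A L \<and>
     (density_ratio A L \<longlonglongrightarrow> 0 \<or> density_ratio A L \<longlonglongrightarrow> 1)"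

text \<open>The minimal automaton of L (Myhill--Nerode / quotient automaton):
  states are the left quotients u^{-1}L for u in A^*, initial state L = [ ]^{-1}L,
  transition q.a = a^{-1}q, final states are the quotients containing the empty word.\<close>
definition lquot :: "'a set \<Rightarrow> 'a list \<Rightarrow> 'a list set \<Rightarrow> 'a list set" where
  "lquot A u L = {v \<in> lists A. u @ v \<in> L}"

definition min_states :: "'a set \<Rightarrow> 'a list set \<Rightarrow> 'a list set set" where
  "min_states A L = {lquot A u L | u. u \<in> lists A}"

definition min_delta :: "'a set \<Rightarrow> 'a list set \<Rightarrow> 'a \<Rightarrow> 'a list set" where
  "min_delta A q a = lquot A [a] q"

definition min_init :: "'a set \<Rightarrow> 'a list set \<Rightarrow> 'a list set" where
  "min_init A L = lquot A [] L"

definition min_final :: "'a set \<Rightarrow> 'a list set \<Rightarrow> 'a list set set" where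
  "min_final A L = {q \<in> min_states A L. [] \<in> q}"

definition Past :: "'a set \<Rightarrow> 'a list set \<Rightarrow> 'a list set set \<Rightarrow> 'a list set" where
  "Past A L P = {w \<in> lists A. act (min_delta A) (min_init A L) w \<in> P}"

end

theory Submission
  imports Defs
begin

(* If mu(L) = 0, then from every state of the minimal automaton the empty quotient is
   reachable: otherwise, the state set being finite, every word could be completed into L by
   at most M letters, and the densities of L over any M + 1 consecutive lengths would sum to at
   least |A|^-M.  Dually, if mu(L) = 1 the quotient A^* is reachable from every state.  Either
   quotient is a sink s.  The worst-case proportion, over all states, of words of length n that
   avoid s is submultiplicative in n and drops below 1 once n exceeds the distance to s, so it
   tends to 0.  Hence almost every word leads to s, and Past(P) has density 1 if s is in P and
   density 0 otherwise. *)

lemma act_Nil [simp]: "act d q [] = q"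
  by (simp add: act_def)

lemma act_Cons [simp]: "act d q (a # w) = act d (d q a) w"
  by (simp add: act_def)

lemma act_append: "act d q (u @ v) = act d (act d q u) v"
  by (simp add: act_def)

lemma act_closed:
  assumes "\<forall>q\<in>Q. \<forall>a\<in>A. d q a \<in> Q" and "q \<in> Q" and "w \<in> lists A"
  shows "act d q w \<in> Q"
  using assms(2,3) by (induction w arbitrary: q) (use assms(1) in auto)

lemma act_sink:
  assumes "\<forall>a\<in>A. d s a = s" and "w \<in> lists A"
  shows "act d s w = s"
  using assms(2) by (induction w) (use assms(1) in auto)

section \<open>Word densities\<close>

lemma words_len_eq: "words_len A n = {xs. set xs \<subseteq> A \<and> length xs = n}"
  by (auto simp: words_len_def)

lemma finite_words_len [simp]: "finite A \<Longrightarrow> finite (words_len A n)"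
  by (simp add: words_len_eq finite_lists_length_eq)

lemma card_words_len: "finite A \<Longrightarrow> card (words_len A n) = card A ^ n"
  by (simp add: words_len_eq card_lists_length_eq)

lemma card_Int_words_len_le: "finite A \<Longrightarrow> card (X \<inter> words_len A n) \<le> card A ^ n"
  by (metis card_words_len card_mono finite_words_len inf_le2)

lemma density_ratio_nonneg: "0 \<le> density_ratio A X n"
  by (simp add: density_ratio_def)

lemma density_ratio_le_1:
  assumes "finite A" and "A \<noteq> {}"
  shows "density_ratio A X n \<le> 1"
  using card_Int_words_len_le[OF assms(1), of X n] assms
  by (simp add: density_ratio_def card_gt_0_iff)

lemma density_ratio_mono:
  assumes "finite A" and "X \<subseteq> Y"
  shows "density_ratio A X n \<le> density_ratio A Y n"
  unfolding density_ratio_def using assms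
  by (intro divide_right_mono) (auto intro: card_mono)

lemma density_ratio_less_1:
  assumes "finite A" and "w \<in> words_len A n" and "w \<notin> X"
  shows "density_ratio A X n < 1"
proof -
  have "card (X \<inter> words_len A n) < card (words_len A n)"
    using assms by (intro psubset_card_mono) auto
  then have "real (card (X \<inter> words_len A n)) < real (card A) ^ n"
    using assms(1) by (metis card_words_len of_nat_less_iff of_nat_power)
  moreover have "0 < real (card A) ^ n"
    using calculation by linarith
  ultimately show ?thesis
    by (simp add: density_ratio_def)
qed

lemma density_ratio_Diff_lists:
  assumes "finite A" and "A \<noteq> {}"
  shows "density_ratio A (lists A - X) n = 1 - density_ratio A X n"
proof -
  have "(lists A - X) \<inter> words_len A n = words_len A n - X \<inter> words_len A n"
    by (auto simp: words_len_def)
  then have "card ((lists A - X) \<inter> words_len A n) = card A ^ n - card (X \<inter> words_len A n)"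
    using assms(1) by (simp add: card_Diff_subset card_words_len)
  with card_Int_words_len_le[OF assms(1), of X n] show ?thesis
    using assms by (simp add: density_ratio_def diff_divide_distrib card_gt_0_iff)
qed

section \<open>Left quotients of a language of density zero\<close>

lemma lquot_subset_lists: "lquot A u X \<subseteq> lists A"
  by (auto simp: lquot_def)

lemma lquot_Nil: "X \<subseteq> lists A \<Longrightarrow> lquot A [] X = X"
  by (auto simp: lquot_def)

lemma lquot_lquot: "v \<in> lists A \<Longrightarrow> lquot A v (lquot A u X) = lquot A (u @ v) X"
  by (auto simp: lquot_def)

lemma lquot_Diff_lists: "u \<in> lists A \<Longrightarrow> lquot A u (lists A - X) = lists A - lquot A u X"
  by (auto simp: lquot_def)

lemma lquot_in_min_states: "u \<in> lists A \<Longrightarrow> lquot A u L \<in> min_states A L"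
  unfolding min_states_def by blast

lemma min_states_subset_lists: "q \<in> min_states A L \<Longrightarrow> q \<subseteq> lists A"
  by (auto simp: min_states_def lquot_def)

lemma self_in_min_states: "L \<subseteq> lists A \<Longrightarrow> L \<in> min_states A L"
  unfolding min_states_def using lquot_Nil[of L A] by (intro CollectI exI[of _ "[]"]) simp

lemma min_states_lquot_subset:
  assumes "u \<in> lists A"
  shows "min_states A (lquot A u X) \<subseteq> min_states A X"
proof
  fix Y assume "Y \<in> min_states A (lquot A u X)"
  then obtain v where v: "v \<in> lists A" and "Y = lquot A v (lquot A u X)"
    unfolding min_states_def by blast
  moreover have "u @ v \<in> lists A"
    using assms v by simp
  ultimately show "Y \<in> min_states A X"
    unfolding min_states_def lquot_lquot[OF v] by blast
qed

lemma finite_min_states_Diff_lists: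
  assumes "finite (min_states A L)"
  shows "finite (min_states A (lists A - L))"
proof -
  have "min_states A (lists A - L) \<subseteq> (\<lambda>Y. lists A - Y) ` min_states A L"
  proof
    fix Y assume "Y \<in> min_states A (lists A - L)"
    then obtain u where u: "u \<in> lists A" and "Y = lquot A u (lists A - L)"
      unfolding min_states_def by blast
    then have "Y = lists A - lquot A u L"
      by (simp only: lquot_Diff_lists)
    with lquot_in_min_states[OF u] show "Y \<in> (\<lambda>Y. lists A - Y) ` min_states A L"
      by blast
  qed
  with assms show ?thesis
    by (rule finite_surj)
qed

lemma card_lquot_Int_words_len_le:
  assumes "finite A" and "u \<in> lists A"
  shows "card (lquot A u X \<inter> words_len A n) \<le> card (X \<inter> words_len A (length u + n))"
proof (rule card_inj_on_le)
  show "inj_on ((@) u) (lquot A u X \<inter> words_len A n)"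
    by (simp add: inj_on_def)
  show "(@) u ` (lquot A u X \<inter> words_len A n) \<subseteq> X \<inter> words_len A (length u + n)"
    using assms(2) by (auto simp: lquot_def words_len_def)
qed (use assms(1) in simp)

lemma card_words_len_le_sum_extensions:
  assumes "finite A"
    and extendable: "\<forall>u\<in>words_len A n. \<exists>v\<in>lists A. length v \<le> M \<and> u @ v \<in> X"
  shows "card A ^ n \<le> (\<Sum>i\<le>M. card (X \<inter> words_len A (n + i)))"
proof -
  obtain V where V: "\<And>u. u \<in> words_len A n \<Longrightarrow> V u \<in> lists A \<and> length (V u) \<le> M \<and> u @ V u \<in> X"
    using extendable by metis
  have "inj_on (\<lambda>u. u @ V u) (words_len A n)"
    by (rule inj_onI) (simp add: words_len_def)
  moreover have "(\<lambda>u. u @ V u) ` words_len A n \<subseteq> (\<Union>i\<le>M. X \<inter> words_len A (n + i))"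
  proof (rule image_subsetI)
    fix u assume u: "u \<in> words_len A n"
    then have "u @ V u \<in> X \<inter> words_len A (n + length (V u))"
      using V[OF u] by (simp add: words_len_def)
    then show "u @ V u \<in> (\<Union>i\<le>M. X \<inter> words_len A (n + i))"
      using V[OF u] by blast
  qed
  ultimately have "card (words_len A n) \<le> card (\<Union>i\<le>M. X \<inter> words_len A (n + i))"
    using assms(1) by (intro card_inj_on_le) auto
  also have "\<dots> \<le> (\<Sum>i\<le>M. card (X \<inter> words_len A (n + i)))"
    by (rule card_UN_le) simp
  finally show ?thesis
    using assms(1) by (simp add: card_words_len)
qed

lemma density_ratio_lquot_tendsto_0:
  assumes "finite A" and "A \<noteq> {}" and u: "u \<in> lists A"
    and lim: "density_ratio A X \<longlonglongrightarrow> 0"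
  shows "density_ratio A (lquot A u X) \<longlonglongrightarrow> 0"
proof (rule tendsto_sandwich)
  define k where "k = real (card A)"
  have k: "k > 0"
    using assms(1,2) by (simp add: k_def card_gt_0_iff)
  show "\<forall>\<^sub>F n in sequentially. 0 \<le> density_ratio A (lquot A u X) n"
    by (simp add: density_ratio_nonneg)
  show "\<forall>\<^sub>F n in sequentially. density_ratio A (lquot A u X) n
      \<le> k ^ length u * density_ratio A X (n + length u)"
  proof (rule always_eventually, rule allI)
    fix n
    have "card (lquot A u X \<inter> words_len A n) \<le> card (X \<inter> words_len A (n + length u))"
      using card_lquot_Int_words_len_le[OF assms(1) u] by (simp add: add.commute)
    then have "density_ratio A (lquot A u X) n \<le> card (X \<inter> words_len A (n + length u)) / k ^ n"
      unfolding density_ratio_def k_def by (simp add: divide_right_mono)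
    also have "\<dots> = k ^ length u * density_ratio A X (n + length u)"
      using k by (simp add: density_ratio_def k_def[symmetric] power_add)
    finally show "density_ratio A (lquot A u X) n \<le> k ^ length u * density_ratio A X (n + length u)" .
  qed
  show "(\<lambda>n. k ^ length u * density_ratio A X (n + length u)) \<longlonglongrightarrow> 0"
    using tendsto_mult_right_zero[OF LIMSEQ_ignore_initial_segment[OF lim]] .
qed (rule tendsto_const)

lemma density_ratio_not_tendsto_0:
  assumes "finite A" and "A \<noteq> {}"
    and extendable: "\<forall>u\<in>lists A. \<exists>v\<in>lists A. length v \<le> M \<and> u @ v \<in> X"
  shows "\<not> density_ratio A X \<longlonglongrightarrow> 0"
proof
  assume lim: "density_ratio A X \<longlonglongrightarrow> 0"
  define k where "k = real (card A)"
  have k: "k \<ge> 1"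
    using assms(1,2) by (simp add: k_def Suc_le_eq card_gt_0_iff)
  have window: "1 / k ^ M \<le> (\<Sum>i\<le>M. density_ratio A X (n + i))" for n
  proof -
    have "card A ^ n \<le> (\<Sum>i\<le>M. card (X \<inter> words_len A (n + i)))"
      using extendable by (intro card_words_len_le_sum_extensions[OF assms(1)]) (auto simp: words_len_def)
    then have "k ^ n \<le> (\<Sum>i\<le>M. real (card (X \<inter> words_len A (n + i))))"
      unfolding k_def by (metis of_nat_le_iff of_nat_power of_nat_sum)
    then have "k ^ n / k ^ (n + M) \<le> (\<Sum>i\<le>M. real (card (X \<inter> words_len A (n + i)))) / k ^ (n + M)"
      using k by (simp add: divide_right_mono)
    also have "\<dots> \<le> (\<Sum>i\<le>M. density_ratio A X (n + i))"
      unfolding sum_divide_distrib density_ratio_def k_def[symmetric]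
      using k by (intro sum_mono divide_left_mono) (auto intro: power_increasing)
    finally show ?thesis
      using k by (simp add: power_add)
  qed
  have "(\<lambda>n. \<Sum>i\<le>M. density_ratio A X (n + i)) \<longlonglongrightarrow> (\<Sum>i\<le>M. 0)"
    by (intro tendsto_sum LIMSEQ_ignore_initial_segment lim)
  then have "1 / k ^ M \<le> 0"
    using window by (intro LIMSEQ_le_const) auto
  with k show False
    by (smt (verit) divide_pos_pos one_le_power)
qed

lemma ex_empty_lquot:
  assumes "finite A" and "A \<noteq> {}" and fin: "finite (min_states A X)"
    and lim: "density_ratio A X \<longlonglongrightarrow> 0"
  shows "\<exists>u\<in>lists A. lquot A u X = {}"
proof (rule ccontr)
  assume "\<not> ?thesis"
  then have nonempty: "Y \<noteq> {}" if "Y \<in> min_states A X" for Y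
    using that by (auto simp: min_states_def)
  define V :: "'a list set \<Rightarrow> 'a list" where "V Y = (SOME v. v \<in> Y)" for Y
  have V: "V Y \<in> Y" if "Y \<in> min_states A X" for Y
    using nonempty[OF that] by (simp add: V_def some_in_eq)
  define M where "M = Max ((length \<circ> V) ` min_states A X)"
  have "\<forall>u\<in>lists A. \<exists>v\<in>lists A. length v \<le> M \<and> u @ v \<in> X"
  proof
    fix u assume "u \<in> lists A"
    then have Y: "lquot A u X \<in> min_states A X"
      by (rule lquot_in_min_states)
    then have "V (lquot A u X) \<in> lquot A u X"
      by (rule V)
    moreover have "length (V (lquot A u X)) \<le> M"
      using Y fin by (simp add: M_def)
    ultimately show "\<exists>v\<in>lists A. length v \<le> M \<and> u @ v \<in> X"
      by (auto simp: lquot_def)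
  qed
  with density_ratio_not_tendsto_0[OF assms(1,2)] lim show False
    by blast
qed

lemma min_state_reaches_empty:
  assumes "finite A" and "A \<noteq> {}" and "finite (min_states A X)"
    and "density_ratio A X \<longlonglongrightarrow> 0" and "q \<in> min_states A X"
  shows "\<exists>v\<in>lists A. lquot A v q = {}"
proof -
  obtain u where u: "u \<in> lists A" and q: "q = lquot A u X"
    using assms(5) by (auto simp: min_states_def)
  show ?thesis
    unfolding q using assms(1,2) u
    by (intro ex_empty_lquot density_ratio_lquot_tendsto_0 finite_subset[OF min_states_lquot_subset]
        assms(3,4))
qed

section \<open>Automata with a sink reachable from every state\<close>

lemma submultiplicative_tendsto_0:
  fixes a :: "nat \<Rightarrow> real"
  assumes nonneg: "\<And>n. 0 \<le> a n" and le_1: "\<And>n. a n \<le> 1"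
    and submult: "\<And>m n. a (m + n) \<le> a m * a n"
    and "0 < M" and "a M < 1"
  shows "a \<longlonglongrightarrow> 0"
proof (rule tendsto_sandwich[of "\<lambda>_. 0" a _ "\<lambda>n. a M ^ (n div M)"])
  have power_bound: "a (j * M + i) \<le> a M ^ j" for j i
  proof (induction j)
    case 0
    show ?case using le_1 by simp
  next
    case (Suc j)
    have "a (Suc j * M + i) \<le> a M * a (j * M + i)"
      using submult[of M "j * M + i"] by (simp add: add.assoc)
    also have "\<dots> \<le> a M * a M ^ j"
      using Suc.IH nonneg by (simp add: mult_left_mono)
    finally show ?case by simp
  qed
  show "\<forall>\<^sub>F n in sequentially. a n \<le> a M ^ (n div M)"
    using power_bound[of "n div M" "n mod M" for n] by (intro always_eventually) simp
  have "norm (a M) < 1"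
    using nonneg assms(5) by simp
  then have "(\<lambda>j. a M ^ j) \<longlonglongrightarrow> 0"
    by (rule LIMSEQ_power_zero)
  from filterlim_compose[OF this filterlim_at_top_div_const_nat[OF \<open>0 < M\<close>]]
  show "(\<lambda>n. a M ^ (n div M)) \<longlonglongrightarrow> 0" .
qed (use nonneg in auto)

definition dfa_lang :: "'a set \<Rightarrow> ('q \<Rightarrow> 'a \<Rightarrow> 'q) \<Rightarrow> 'q \<Rightarrow> 'q set \<Rightarrow> 'a list set" where
  "dfa_lang A d q F = {w \<in> lists A. act d q w \<in> F}"

lemma lquot_dfa_lang:
  "u \<in> lists A \<Longrightarrow> lquot A u (dfa_lang A d q F) = dfa_lang A d (act d q u) F"
  by (auto simp: lquot_def dfa_lang_def act_append)

lemma dfa_lang_Compl: "dfa_lang A d q (- F) = lists A - dfa_lang A d q F"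
  by (auto simp: dfa_lang_def)

lemma card_Int_words_len_add_le:
  assumes "finite A" and prefix_closed: "\<And>u v. u @ v \<in> X \<Longrightarrow> u \<in> X"
  shows "card (X \<inter> words_len A (m + n))
    \<le> (\<Sum>u \<in> X \<inter> words_len A m. card (lquot A u X \<inter> words_len A n))"
proof -
  have "X \<inter> words_len A (m + n) \<subseteq> (\<Union>u \<in> X \<inter> words_len A m. (@) u ` (lquot A u X \<inter> words_len A n))"
  proof
    fix w assume w: "w \<in> X \<inter> words_len A (m + n)"
    then have "take m w \<in> X \<inter> words_len A m" and "drop m w \<in> lquot A (take m w) X \<inter> words_len A n"
      using prefix_closed[of "take m w" "drop m w"]
      by (auto simp: words_len_def lquot_def dest: in_set_takeD in_set_dropD)
    then show "w \<in> (\<Union>u \<in> X \<inter> words_len A m. (@) u ` (lquot A u X \<inter> words_len A n))"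
      by (intro UN_I[of "take m w"] image_eqI[of w _ "drop m w"]) auto
  qed
  then have "card (X \<inter> words_len A (m + n))
      \<le> card (\<Union>u \<in> X \<inter> words_len A m. (@) u ` (lquot A u X \<inter> words_len A n))"
    using assms(1) by (intro card_mono) auto
  also have "\<dots> \<le> (\<Sum>u \<in> X \<inter> words_len A m. card ((@) u ` (lquot A u X \<inter> words_len A n)))"
    using assms(1) by (intro card_UN_le) auto
  also have "\<dots> = (\<Sum>u \<in> X \<inter> words_len A m. card (lquot A u X \<inter> words_len A n))"
    by (intro sum.cong refl card_image) (simp add: inj_on_def)
  finally show ?thesis .
qed

lemma density_ratio_avoid_sink_add_le:
  fixes d :: "'q \<Rightarrow> 'a \<Rightarrow> 'q"
  assumes "finite A" and "A \<noteq> {}"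
    and closed: "\<forall>x\<in>Q. \<forall>a\<in>A. d x a \<in> Q" and "q \<in> Q" and sink: "\<forall>a\<in>A. d s a = s"
    and bound: "\<And>x. x \<in> Q \<Longrightarrow> density_ratio A (dfa_lang A d x (- {s})) n \<le> b"
  shows "density_ratio A (dfa_lang A d q (- {s})) (m + n)
    \<le> density_ratio A (dfa_lang A d q (- {s})) m * b"
proof -
  define X where "X = dfa_lang A d q (- {s})"
  define k where "k = real (card A)"
  have k: "k > 0"
    using assms(1,2) by (simp add: k_def card_gt_0_iff)
  have prefix_closed: "u \<in> X" if "u @ v \<in> X" for u v
    using that act_sink[of A d s v] sink by (auto simp: X_def dfa_lang_def act_append)
  have "real (card (X \<inter> words_len A (m + n)))
      \<le> (\<Sum>u \<in> X \<inter> words_len A m. real (card (lquot A u X \<inter> words_len A n)))"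
    unfolding of_nat_sum[symmetric] of_nat_le_iff
    by (rule card_Int_words_len_add_le[OF assms(1) prefix_closed])
  also have "\<dots> \<le> (\<Sum>u \<in> X \<inter> words_len A m. b * k ^ n)"
  proof (rule sum_mono)
    fix u assume u: "u \<in> X \<inter> words_len A m"
    then have "act d q u \<in> Q"
      using act_closed[OF closed \<open>q \<in> Q\<close>] by (auto simp: X_def dfa_lang_def)
    then have "density_ratio A (lquot A u X) n \<le> b"
      using u bound by (auto simp: X_def lquot_dfa_lang words_len_def)
    then show "real (card (lquot A u X \<inter> words_len A n)) \<le> b * k ^ n"
      using k by (simp add: density_ratio_def k_def[symmetric] divide_le_eq)
  qed
  also have "\<dots> = real (card (X \<inter> words_len A m)) * b * k ^ n"
    by simp
  finally have "real (card (X \<inter> words_len A (m + n))) / k ^ (m + n)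
      \<le> real (card (X \<inter> words_len A m)) * b * k ^ n / k ^ (m + n)"
    using k by (intro divide_right_mono) auto
  also have "\<dots> = real (card (X \<inter> words_len A m)) / k ^ m * b"
    using k by (simp add: power_add)
  finally show ?thesis
    by (simp add: X_def density_ratio_def k_def)
qed

lemma density_ratio_avoid_sink_less_1:
  fixes d :: "'q \<Rightarrow> 'a \<Rightarrow> 'q"
  assumes "finite A" and "A \<noteq> {}"
    and closed: "\<forall>x\<in>Q. \<forall>a\<in>A. d x a \<in> Q" and "q \<in> Q" and sink: "\<forall>a\<in>A. d s a = s"
    and "v \<in> lists A" and "act d q v = s" and "length v \<le> n"
  shows "density_ratio A (dfa_lang A d q (- {s})) n < 1"
proof -
  have "density_ratio A (dfa_lang A d q (- {s})) (length v + (n - length v))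
      \<le> density_ratio A (dfa_lang A d q (- {s})) (length v) * 1"
    using assms(1-5) by (intro density_ratio_avoid_sink_add_le density_ratio_le_1)
  also have "\<dots> < 1"
    unfolding mult_1_right using assms(1,6,7)
    by (intro density_ratio_less_1[of _ v]) (auto simp: words_len_def dfa_lang_def)
  finally show ?thesis
    using assms(8) by simp
qed

lemma dfa_lang_sink_density_tendsto_1:
  fixes d :: "'q \<Rightarrow> 'a \<Rightarrow> 'q"
  assumes "finite A" and "A \<noteq> {}" and "finite Q"
    and closed: "\<forall>x\<in>Q. \<forall>a\<in>A. d x a \<in> Q" and "q \<in> Q"
    and sink: "\<forall>a\<in>A. d s a = s" and reach: "\<forall>x\<in>Q. \<exists>v\<in>lists A. act d x v = s"
  shows "density_ratio A (dfa_lang A d q {s}) \<longlonglongrightarrow> 1"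
proof -
  let ?r = "\<lambda>x. density_ratio A (dfa_lang A d x (- {s}))"
  define a where "a n = Max ((\<lambda>x. ?r x n) ` Q)" for n
  have r_le_a: "?r x n \<le> a n" if "x \<in> Q" for x n
    using that assms(3) by (simp add: a_def)
  have a_attained: "\<exists>x\<in>Q. a n = ?r x n" for n
  proof -
    have "a n \<in> (\<lambda>x. ?r x n) ` Q"
      unfolding a_def using assms(3,5) by (intro Max_in) auto
    then show ?thesis
      by blast
  qed
  have a_nonneg: "0 \<le> a n" for n
    using a_attained[of n] density_ratio_nonneg by metis
  have a_le_1: "a n \<le> 1" for n
    using a_attained[of n] density_ratio_le_1[OF assms(1,2)] by metis
  have a_submult: "a (m + n) \<le> a m * a n" for m n
  proof -
    obtain x where "x \<in> Q" and "a (m + n) = ?r x (m + n)"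
      using a_attained by blast
    moreover have "?r x (m + n) \<le> ?r x m * a n"
      using r_le_a \<open>x \<in> Q\<close> by (intro density_ratio_avoid_sink_add_le[OF assms(1,2) closed _ sink])
    moreover have "?r x m * a n \<le> a m * a n"
      using r_le_a[OF \<open>x \<in> Q\<close>] a_nonneg by (intro mult_right_mono)
    ultimately show ?thesis
      by linarith
  qed
  obtain V where V: "\<And>x. x \<in> Q \<Longrightarrow> V x \<in> lists A \<and> act d x (V x) = s"
    using reach by metis
  define M where "M = Max ((length \<circ> V) ` Q) + 1"
  have aM: "a M < 1"
  proof -
    obtain x where x: "x \<in> Q" and "a M = ?r x M"
      using a_attained by blast
    moreover have "length (V x) \<le> M"
      using x assms(3) by (simp add: M_def le_SucI)
    moreover have "V x \<in> lists A" and "act d x (V x) = s"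
      using V[OF x] by auto
    ultimately show ?thesis
      using density_ratio_avoid_sink_less_1[OF assms(1,2) closed x sink] by simp
  qed
  have "a \<longlonglongrightarrow> 0"
    by (rule submultiplicative_tendsto_0[OF a_nonneg a_le_1 a_submult _ aM]) (simp add: M_def)
  then have lim: "(\<lambda>n. 1 - a n) \<longlonglongrightarrow> 1"
    using tendsto_diff[OF tendsto_const[of 1]] by fastforce
  have lower: "1 - a n \<le> density_ratio A (dfa_lang A d q {s}) n" for n
    using dfa_lang_Compl[of A d q "- {s}"] density_ratio_Diff_lists[OF assms(1,2)]
      r_le_a[OF \<open>q \<in> Q\<close>]
    by simp
  show ?thesis
    using always_eventually[OF allI, OF lower]
      always_eventually[OF allI, OF density_ratio_le_1[OF assms(1,2)]]
    by (rule tendsto_sandwich[OF _ _ lim tendsto_const])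
qed

lemma dfa_lang_sink_density_tendsto:
  fixes d :: "'q \<Rightarrow> 'a \<Rightarrow> 'q"
  assumes "finite A" and "A \<noteq> {}" and "finite Q"
    and "\<forall>x\<in>Q. \<forall>a\<in>A. d x a \<in> Q" and "q \<in> Q"
    and "\<forall>a\<in>A. d s a = s" and "\<forall>x\<in>Q. \<exists>v\<in>lists A. act d x v = s"
  shows "density_ratio A (dfa_lang A d q P) \<longlonglongrightarrow> (if s \<in> P then 1 else 0)"
proof -
  have lim: "density_ratio A (dfa_lang A d q {s}) \<longlonglongrightarrow> 1"
    by (rule dfa_lang_sink_density_tendsto_1[OF assms])
  show ?thesis
  proof (cases "s \<in> P")
    case True
    then have lower:
      "density_ratio A (dfa_lang A d q {s}) n \<le> density_ratio A (dfa_lang A d q P) n" for n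
      using assms(1) by (intro density_ratio_mono) (auto simp: dfa_lang_def)
    have "density_ratio A (dfa_lang A d q P) \<longlonglongrightarrow> 1"
      using always_eventually[OF allI, OF lower]
        always_eventually[OF allI, OF density_ratio_le_1[OF assms(1,2)]]
      by (rule tendsto_sandwich[OF _ _ lim tendsto_const])
    with True show ?thesis
      by simp
  next
    case False
    then have upper:
      "density_ratio A (dfa_lang A d q P) n \<le> 1 - density_ratio A (dfa_lang A d q {s}) n" for n
      using density_ratio_mono[OF assms(1), of "dfa_lang A d q P" "lists A - dfa_lang A d q {s}" n]
      by (auto simp: dfa_lang_def density_ratio_Diff_lists[OF assms(1,2)])
    have "(\<lambda>n. 1 - density_ratio A (dfa_lang A d q {s}) n) \<longlonglongrightarrow> 0"
      using tendsto_diff[OF tendsto_const[of 1] lim] by simp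
    with always_eventually[OF allI, OF density_ratio_nonneg] always_eventually[OF allI, OF upper]
    have "density_ratio A (dfa_lang A d q P) \<longlonglongrightarrow> 0"
      by (rule tendsto_sandwich[OF _ _ tendsto_const])
    with False show ?thesis
      by simp
  qed
qed

lemma regular_dfa_lang:
  fixes d :: "'q \<Rightarrow> 'a \<Rightarrow> 'q"
  assumes "finite Q" and "q \<in> Q" and closed: "\<forall>x\<in>Q. \<forall>a\<in>A. d x a \<in> Q"
  shows "regular A (dfa_lang A d q F)"
proof -
  obtain f :: "'q \<Rightarrow> nat" where inj: "inj_on f Q"
    using finite_imp_inj_to_nat_seg[OF assms(1)] by blast
  define d' where "d' i a = f (d (inv_into Q f i) a)" for i a
  have simulation: "act d' (f x) w = f (act d x w)" if "x \<in> Q" and "w \<in> lists A" for x w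
    using that
  proof (induction w arbitrary: x)
    case (Cons a w)
    then have "d' (f x) a = f (d x a)" and "d x a \<in> Q"
      using closed inj by (auto simp: d'_def)
    with Cons show ?case
      by simp
  qed simp
  have "act d' (f q) w \<in> f ` (F \<inter> Q) \<longleftrightarrow> act d q w \<in> F" if "w \<in> lists A" for w
    using simulation[OF assms(2) that] act_closed[OF closed assms(2) that] inj
    by (simp add: inj_on_image_mem_iff)
  then have "dfa_lang A d q F = {w \<in> lists A. act d' (f q) w \<in> f ` (F \<inter> Q)}"
    unfolding dfa_lang_def by blast
  moreover have "\<forall>i\<in>f ` Q. \<forall>a\<in>A. d' i a \<in> f ` Q"
    using closed inj by (auto simp: d'_def)
  ultimately show ?thesis
    unfolding regular_def dfa_lang_def using assms(1,2)
    by (intro conjI exI[of _ "f ` Q"] exI[of _ d'] exI[of _ "f q"] exI[of _ "f ` (F \<inter> Q)"]) auto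
qed

section \<open>The minimal automaton of a zero-one language\<close>

lemma finite_min_states:
  assumes "regular A L"
  shows "finite (min_states A L)"
proof -
  obtain Q :: "nat set" and d q0 F where "finite Q" and "q0 \<in> Q"
    and closed: "\<forall>q\<in>Q. \<forall>a\<in>A. d q a \<in> Q" and L: "L = dfa_lang A d q0 F"
    using assms unfolding regular_def dfa_lang_def by blast
  have "min_states A L \<subseteq> (\<lambda>p. dfa_lang A d p F) ` Q"
  proof
    fix Y assume "Y \<in> min_states A L"
    then obtain u where u: "u \<in> lists A" and "Y = lquot A u L"
      by (auto simp: min_states_def)
    then have "Y = dfa_lang A d (act d q0 u) F"
      by (simp only: L lquot_dfa_lang)
    with act_closed[OF closed \<open>q0 \<in> Q\<close> u] show "Y \<in> (\<lambda>p. dfa_lang A d p F) ` Q"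
      by blast
  qed
  with \<open>finite Q\<close> show ?thesis
    by (rule finite_surj)
qed

lemma min_delta_closed: "\<forall>q\<in>min_states A L. \<forall>a\<in>A. min_delta A q a \<in> min_states A L"
proof (intro ballI)
  fix q a assume "q \<in> min_states A L" and a: "a \<in> A"
  then obtain u where u: "u \<in> lists A" and "q = lquot A u L"
    by (auto simp: min_states_def)
  then have "min_delta A q a = lquot A (u @ [a]) L"
    using a by (simp add: min_delta_def lquot_lquot)
  with u a show "min_delta A q a \<in> min_states A L"
    by (simp add: lquot_in_min_states)
qed

lemma act_min_delta: "X \<subseteq> lists A \<Longrightarrow> act (min_delta A) X w = lquot A w X"
proof (induction w arbitrary: X)
  case (Cons a w)
  then show ?case
    by (auto simp: min_delta_def lquot_def)
qed (simp add: lquot_Nil)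

lemma Past_eq_dfa_lang: "L \<subseteq> lists A \<Longrightarrow> Past A L P = dfa_lang A (min_delta A) L P"
  by (simp add: Past_def dfa_lang_def min_init_def lquot_Nil)

lemma zero_one_lang_absorbing_quotient:
  assumes "finite A" and "A \<noteq> {}" and "zero_one_lang A L"
  obtains s where "s = {} \<or> s = lists A" and "\<forall>q\<in>min_states A L. \<exists>v\<in>lists A. lquot A v q = s"
proof -
  have fin: "finite (min_states A L)"
    using assms(3) unfolding zero_one_lang_def by (blast intro: finite_min_states)
  from assms(3) consider "density_ratio A L \<longlonglongrightarrow> 0" | "density_ratio A L \<longlonglongrightarrow> 1"
    unfolding zero_one_lang_def by blast
  then show ?thesis
  proof cases
    case 1
    then show ?thesis
      using that[of "{}"] min_state_reaches_empty[OF assms(1,2) fin 1] by blast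
  next
    case 2
    have "density_ratio A (lists A - L) = (\<lambda>n. 1 - density_ratio A L n)"
      by (rule ext) (rule density_ratio_Diff_lists[OF assms(1,2)])
    then have co_lim: "density_ratio A (lists A - L) \<longlonglongrightarrow> 0"
      using tendsto_diff[OF tendsto_const[of 1] 2] by simp
    have co_reach: "\<exists>v\<in>lists A. lquot A v Y = {}" if "Y \<in> min_states A (lists A - L)" for Y
      using finite_min_states_Diff_lists[OF fin] co_lim that
      by (rule min_state_reaches_empty[OF assms(1,2)])
    have "\<exists>v\<in>lists A. lquot A v q = lists A" if q_state: "q \<in> min_states A L" for q
    proof -
      obtain u where u: "u \<in> lists A" and q: "q = lquot A u L"
        using q_state unfolding min_states_def by blast
      obtain v where v: "v \<in> lists A" and "lquot A v (lquot A u (lists A - L)) = {}"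
        using co_reach[OF lquot_in_min_states[OF u]] by blast
      then have "lists A - lquot A v q = {}"
        by (simp add: q u lquot_Diff_lists)
      with v show ?thesis
        using lquot_subset_lists[of A v q] by blast
    qed
    then show ?thesis
      using that[of "lists A"] by blast
  qed
qed

theorem lemma6:
  fixes A :: "'a set" and L :: "'a list set" and P :: "'a list set set"
  assumes "finite A" and "A \<noteq> {}"
    and "zero_one_lang A L"
    and "P \<subseteq> min_states A L"
  shows "zero_one_lang A (Past A L P)"
proof -
  have "regular A L"
    using assms(3) by (simp add: zero_one_lang_def)
  then have L: "L \<subseteq> lists A" and fin: "finite (min_states A L)"
    by (simp_all add: regular_def finite_min_states)
  obtain s where s: "s = {} \<or> s = lists A"
    and reach: "\<forall>q\<in>min_states A L. \<exists>v\<in>lists A. lquot A v q = s"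
    using zero_one_lang_absorbing_quotient[OF assms(1-3)] by blast
  have reach_act: "\<forall>q\<in>min_states A L. \<exists>v\<in>lists A. act (min_delta A) q v = s"
    using reach by (simp add: act_min_delta min_states_subset_lists)
  have sink: "\<forall>a\<in>A. min_delta A s a = s"
    using s by (auto simp: min_delta_def lquot_def)
  have "density_ratio A (Past A L P) \<longlonglongrightarrow> (if s \<in> P then 1 else 0)"
    unfolding Past_eq_dfa_lang[OF L]
    by (rule dfa_lang_sink_density_tendsto[OF assms(1,2) fin min_delta_closed
          self_in_min_states[OF L] sink reach_act])
  moreover have "regular A (Past A L P)"
    unfolding Past_eq_dfa_lang[OF L]
    by (rule regular_dfa_lang[OF fin self_in_min_states[OF L] min_delta_closed])
  ultimately show ?thesis
    unfolding zero_one_lang_def by (cases "s \<in> P") auto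
qed

end
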